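(* Let $n\ge 2$ and let $D$ be an $n\times n$ unit spherical Euclidean distance matrix (EDM) of embedding dimension $r$, and let $w\in\mathbb{R}^n$ be a vector with $Dw=e$. Define the symmetric matrix $\Delta$ by $D = 2(E-I) + 2\Delta$. Then $\lambda_{\max}(\Delta)=1$, $w$ is an eigenvector of $\Delta$ associated with $\lambda_{\max}(\Delta)$, and $r = n - m(\lambda_{\max}(\Delta))$, where $m(\lambda_{\max}(\Delta))$ denotes the multiplicity of the eigenvalue $\lambda_{\max}(\Delta)$.
   Context: $e$ denotes the all-ones vector in $\mathbb{R}^n$, $E$ the $n\times n$ all-ones matrix, $I$ the $n\times n$ identity matrix. An $n\times n$ matrix $D=(d_{ij})$ is a Euclidean distance matrix (EDM) if there exist points $p^1,\dots,p^n$ in some Euclidean space with $d_{ij}=\|p^i-p^j\|^2$ for all $i,j$; the dimension of the affine span of these points is the embedding dimension of $D$. $D$ is a unit spherical EDM if such points can be chosen to lie on a sphere of radius $1$. For a real symmetric matrix $A$, $\lambda_{\max}(A)$ is its largest eigenvalue. *)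

theory Defs
  imports "Jordan_Normal_Form.Char_Poly" "Jordan_Normal_Form.DL_Rank"
begin

definition ones_vec :: "nat \<Rightarrow> real vec" where
  "ones_vec n = vec n (\<lambda>_. 1)"

definition ones_mat :: "nat \<Rightarrow> real mat" where
  "ones_mat n = mat n n (\<lambda>_. 1)"

definition sqdist_vec :: "real vec \<Rightarrow> real vec \<Rightarrow> real" where
  "sqdist_vec x y = (x - y) \<bullet> (x - y)"

text \<open>Points p 0, ..., p (n-1) in R^r whose affine span is all of R^r,
  i.e. the differences p j - p 0 span R^r (the matrix with these columns has rank r).\<close>
definition affinely_spanning :: "nat \<Rightarrow> nat \<Rightarrow> (nat \<Rightarrow> real vec) \<Rightarrow> bool" where
  "affinely_spanning n r p \<longleftrightarrow>
     (\<forall>i<n. p i \<in> carrier_vec r) \<and>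
     vec_space.rank r (mat r n (\<lambda>(a, j). (p j - p 0) $ a)) = r"

definition edm_config :: "nat \<Rightarrow> real mat \<Rightarrow> nat \<Rightarrow> (nat \<Rightarrow> real vec) \<Rightarrow> bool" where
  "edm_config n D r p \<longleftrightarrow>
     D \<in> carrier_mat n n \<and> affinely_spanning n r p \<and>
     (\<forall>i<n. \<forall>j<n. D $$ (i, j) = sqdist_vec (p i) (p j))"

definition unit_spherical_edm :: "nat \<Rightarrow> real mat \<Rightarrow> nat \<Rightarrow> bool" where
  "unit_spherical_edm n D r \<longleftrightarrow>
     (\<exists>p c. edm_config n D r p \<and> c \<in> carrier_vec r \<and>
            (\<forall>i<n. sqdist_vec (p i) c = 1))"

definition lambda_max :: "real mat \<Rightarrow> real" where
  "lambda_max A = Max {k. eigenvalue A k}"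

text \<open>Multiplicity of an eigenvalue (as root of the characteristic polynomial;
  for symmetric matrices this equals the geometric multiplicity).\<close>
definition eig_mult :: "real mat \<Rightarrow> real \<Rightarrow> nat" where
  "eig_mult A k = Polynomial.order k (char_poly A)"

end

theory Submission
  imports Defs
begin

(* Write p i = c + x i with |x i| = 1 and let X be the r x n matrix with columns x i, so that
  D i j = 2 - 2 (x i . x j) and Delta = I - X^T X. Because the points affinely span R^r, the
  map i |-> x i . v is constant only for v = 0. By Dw = e it is constant for v = X w, so Xw = 0
  and Delta w = w; as X^T X is positive semidefinite, 1 is the largest eigenvalue of Delta.
  The same fact makes X X^T invertible, and Sylvester's determinant identity
  (t-1)^n det(tI - (I - X X^T)) = (t-1)^r det(tI - Delta) then shows that 1 is a root of the
  characteristic polynomial of Delta of multiplicity exactly n - r. *)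

lemma sylvester_det_identity:
  fixes A :: "'a::idom mat"
  assumes A: "A \<in> carrier_mat n r" and B: "B \<in> carrier_mat r n"
  shows "z ^ n * det (z \<cdot>\<^sub>m 1\<^sub>m r + B * A) = z ^ r * det (z \<cdot>\<^sub>m 1\<^sub>m n + A * B)"
proof -
  \<comment> \<open>Multiplying P = [[z I, -B], [A, I]] on the right by [[I, 0], [-A, I]], resp.
    [[I, B], [0, z I]], makes it block triangular with diagonal blocks z I + B A, I, resp.
    z I, z I + A B.\<close>
  let ?P = "four_block_mat (z \<cdot>\<^sub>m 1\<^sub>m r) (- B) A (1\<^sub>m n)"
  let ?L = "four_block_mat (1\<^sub>m r) (0\<^sub>m r n) (- A) (1\<^sub>m n)"
  let ?Q = "four_block_mat (1\<^sub>m r) B (0\<^sub>m n r) (z \<cdot>\<^sub>m 1\<^sub>m n)"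
  have P: "?P \<in> carrier_mat (r + n) (r + n)" and L: "?L \<in> carrier_mat (r + n) (r + n)"
    and Q: "?Q \<in> carrier_mat (r + n) (r + n)"
    using A B by auto
  have mA: "- A \<in> carrier_mat n r" and mB: "- B \<in> carrier_mat r n"
    and zr: "z \<cdot>\<^sub>m 1\<^sub>m r \<in> carrier_mat r r" and zn: "z \<cdot>\<^sub>m 1\<^sub>m n \<in> carrier_mat n n"
    using A B by auto
  have BA: "z \<cdot>\<^sub>m 1\<^sub>m r + B * A \<in> carrier_mat r r"
    and AB: "z \<cdot>\<^sub>m 1\<^sub>m n + A * B \<in> carrier_mat n n"
    using A B by auto
  have mult_if: "\<And>(a::'a) b P. a * (b * (if P then 1 else 0)) = (if P then a * b else 0)"
    "\<And>(a::'a) b P. b * (if P then 1 else 0) * a = (if P then b * a else 0)" by auto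
  have "?P * ?L = four_block_mat (z \<cdot>\<^sub>m 1\<^sub>m r + B * A) (- B) (0\<^sub>m n r) (1\<^sub>m n)"
    apply (subst mult_four_block_mat[OF zr mB A one_carrier_mat one_carrier_mat zero_carrier_mat
          mA one_carrier_mat])
    apply (rule cong_four_block_mat)
    using A B by (auto intro!: eq_matI simp: scalar_prod_def sum_negf mult_if mult.commute)
  then have "det ?P = det (z \<cdot>\<^sub>m 1\<^sub>m r + B * A)"
    using det_mult[OF P L] det_four_block_mat_lower_left_zero[OF BA mB refl one_carrier_mat]
      det_four_block_mat_upper_right_zero[OF one_carrier_mat refl mA one_carrier_mat]
    by simp
  moreover have "?P * ?Q = four_block_mat (z \<cdot>\<^sub>m 1\<^sub>m r) (0\<^sub>m r n) A (z \<cdot>\<^sub>m 1\<^sub>m n + A * B)"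
    apply (subst mult_four_block_mat[OF zr mB A one_carrier_mat one_carrier_mat B zero_carrier_mat
          zn])
    apply (rule cong_four_block_mat)
    using A B by (auto intro!: eq_matI simp: scalar_prod_def sum_negf mult_if mult.commute)
  then have "det ?P * z ^ n = z ^ r * det (z \<cdot>\<^sub>m 1\<^sub>m n + A * B)"
    using det_mult[OF P Q] det_four_block_mat_upper_right_zero[OF zr refl A AB]
      det_four_block_mat_lower_left_zero[OF one_carrier_mat B refl zn]
    by (simp add: mult.commute)
  ultimately show ?thesis by (simp add: mult.commute)
qed

lemma char_poly_matrix_scalar_minus:
  assumes "N \<in> carrier_mat k k"
  shows "char_poly_matrix (c \<cdot>\<^sub>m 1\<^sub>m k - N) = [:-c, 1:] \<cdot>\<^sub>m 1\<^sub>m k + map_mat (\<lambda>x. [:x:]) N"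
  unfolding char_poly_matrix_def using assms by (intro eq_matI) (auto simp: one_pCons)

lemma order_char_poly_scalar_minus_mult:
  fixes A :: "'a::field mat"
  assumes A: "A \<in> carrier_mat n r" and B: "B \<in> carrier_mat r n" and BA: "det (B * A) \<noteq> 0"
  shows "Polynomial.order c (char_poly (c \<cdot>\<^sub>m 1\<^sub>m n - A * B)) + r = n"
proof -
  let ?z = "[:-c, 1:]" and ?q = "char_poly (c \<cdot>\<^sub>m 1\<^sub>m r - B * A)"
  let ?p = "char_poly (c \<cdot>\<^sub>m 1\<^sub>m n - A * B)"
  have BAc: "B * A \<in> carrier_mat r r" using A B by simp
  have "map_mat (\<lambda>x. [:x:]) A \<in> carrier_mat n r" "map_mat (\<lambda>x. [:x:]) B \<in> carrier_mat r n"
    using A B by auto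
  from sylvester_det_identity[OF this, of ?z]
  have "?z ^ n * ?q = ?z ^ r * ?p"
    using A B by (simp add: char_poly_def char_poly_matrix_scalar_minus map_poly_mult)
  moreover have "poly ?q c \<noteq> 0"
  proof -
    have "- char_matrix (c \<cdot>\<^sub>m 1\<^sub>m r - B * A) c = B * A"
      using A B by (intro eq_matI) (auto simp: char_matrix_def)
    moreover have "c \<cdot>\<^sub>m 1\<^sub>m r - B * A \<in> carrier_mat r r"
      using BAc by (intro minus_carrier_mat) auto
    ultimately show ?thesis using char_poly_matrix BA by metis
  qed
  moreover have "?z ^ n * ?q \<noteq> 0" using \<open>poly ?q c \<noteq> 0\<close> by auto
  ultimately show ?thesis
    using order_mult[of "?z ^ n" ?q c] order_mult[of "?z ^ r" ?p c] order_0I[of ?q c]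
      order_power_n_n[of c n] order_power_n_n[of c r]
    by (simp add: add.commute)
qed

lemma det_mult_transpose_nonzero:
  fixes X :: "real mat"
  assumes X: "X \<in> carrier_mat r n"
    and kernel: "\<And>v. v \<in> carrier_vec r \<Longrightarrow> transpose_mat X *\<^sub>v v = 0\<^sub>v n \<Longrightarrow> v = 0\<^sub>v r"
  shows "det (X * transpose_mat X) \<noteq> 0"
proof
  assume "det (X * transpose_mat X) = 0"
  then obtain v where v: "v \<in> carrier_vec r" "v \<noteq> 0\<^sub>v r" "(X * transpose_mat X) *\<^sub>v v = 0\<^sub>v r"
    using det_0_iff_vec_prod_zero[of "X * transpose_mat X" r] X by auto
  let ?u = "transpose_mat X *\<^sub>v v"
  have "?u \<bullet> ?u = v \<bullet> (X *\<^sub>v ?u)"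
    using transpose_vec_mult_scalar[OF X _ v(1)] X v by simp
  also have "X *\<^sub>v ?u = 0\<^sub>v r" using v X by simp
  finally have "?u = 0\<^sub>v n" using conjugate_square_eq_0_vec[of ?u n] X v by simp
  then show False using kernel v by blast
qed

lemma eigenvalue_one_minus_gram_le_one:
  fixes X :: "real mat"
  assumes X: "X \<in> carrier_mat r n" and "eigenvalue (1\<^sub>m n - transpose_mat X * X) k"
  shows "k \<le> 1"
proof -
  obtain v where v: "v \<in> carrier_vec n" "v \<noteq> 0\<^sub>v n"
    and ev: "(1\<^sub>m n - transpose_mat X * X) *\<^sub>v v = k \<cdot>\<^sub>v v"
    using assms(2) X unfolding eigenvalue_def eigenvector_def by auto
  let ?x = "X *\<^sub>v v"
  have "k * (v \<bullet> v) = ((1\<^sub>m n - transpose_mat X * X) *\<^sub>v v) \<bullet> v"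
    using ev v by simp
  also have "(1\<^sub>m n - transpose_mat X * X) *\<^sub>v v = v - transpose_mat X *\<^sub>v ?x"
    using X v by (subst minus_mult_distrib_mat_vec[of _ n n]) auto
  also have "(v - transpose_mat X *\<^sub>v ?x) \<bullet> v = v \<bullet> v - (transpose_mat X *\<^sub>v ?x) \<bullet> v"
    using X v by (subst minus_scalar_prod_distrib[of _ n]) auto
  also have "(transpose_mat X *\<^sub>v ?x) \<bullet> v = ?x \<bullet> ?x"
    using transpose_vec_mult_scalar[OF X v(1)] X v by simp
  finally have "k * (v \<bullet> v) \<le> 1 * (v \<bullet> v)"
    using conjugate_square_ge_0_vec[of ?x] by simp
  moreover have "v \<bullet> v > 0" using conjugate_square_greater_0_vec[OF v(1)] v(2) by simp
  ultimately show ?thesis by (rule mult_right_le_imp_le)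
qed

lemma lambda_max_eqI:
  assumes A: "A \<in> carrier_mat n n" and "eigenvalue A k" and "\<And>l. eigenvalue A l \<Longrightarrow> l \<le> k"
  shows "lambda_max A = k"
proof -
  have "char_poly A \<noteq> 0" using degree_monic_char_poly[OF A] by auto
  then have "finite {l. eigenvalue A l}"
    using poly_roots_finite eigenvalue_root_char_poly[OF A] by simp
  then show ?thesis unfolding lambda_max_def using assms(2,3) by (intro Max_eqI) auto
qed

lemma lambda_max_one_minus_gram:
  fixes X :: "real mat"
  assumes X: "X \<in> carrier_mat r n" and w: "w \<in> carrier_vec n" "w \<noteq> 0\<^sub>v n"
    and kernel: "X *\<^sub>v w = 0\<^sub>v r"
  shows "eigenvector (1\<^sub>m n - transpose_mat X * X) w 1"
    and "lambda_max (1\<^sub>m n - transpose_mat X * X) = 1"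
proof -
  have "transpose_mat X * X *\<^sub>v w = 0\<^sub>v n" using X w kernel by auto
  then show eigenvector: "eigenvector (1\<^sub>m n - transpose_mat X * X) w 1"
    using X w minus_mult_distrib_mat_vec[OF one_carrier_mat _ w(1), of "transpose_mat X * X"]
    unfolding eigenvector_def by simp
  show "lambda_max (1\<^sub>m n - transpose_mat X * X) = 1"
    using X eigenvector eigenvalue_one_minus_gram_le_one[OF X]
    by (intro lambda_max_eqI[of _ n]) (auto simp: eigenvalue_def)
qed

lemma eig_mult_one_minus_gram:
  fixes X :: "real mat"
  assumes "X \<in> carrier_mat r n" and "det (X * transpose_mat X) \<noteq> 0"
  shows "eig_mult (1\<^sub>m n - transpose_mat X * X) 1 + r = n"
proof -
  have "1 \<cdot>\<^sub>m 1\<^sub>m n = (1\<^sub>m n :: real mat)" by (intro eq_matI) auto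
  then show ?thesis
    using order_char_poly_scalar_minus_mult[of "transpose_mat X" n r X 1] assms
    unfolding eig_mult_def by simp
qed

lemma rank_full_orthogonal_cols_imp_zero:
  fixes Y :: "real mat"
  assumes Y: "Y \<in> carrier_mat r m" and rank: "vec_space.rank r Y = r"
    and v: "v \<in> carrier_vec r" and orth: "\<And>j. j < m \<Longrightarrow> col Y j \<bullet> v = 0"
  shows "v = 0\<^sub>v r"
proof -
  interpret vec_space "TYPE(real)" r .
  obtain S where max: "maximal S (\<lambda>T. T \<subseteq> set (cols Y) \<and> lin_indpt T)"
    using maximal_exists[of "\<lambda>T. T \<subseteq> set (cols Y) \<and> lin_indpt T" "card (set (cols Y))" "{}"]
    by (meson List.finite_set card_mono empty_iff empty_subsetI finite_lin_indpt2 rev_finite_subset)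
  have S: "S \<subseteq> set (cols Y)" "lin_indpt S" using max unfolding maximal_def by auto
  have S_carrier: "S \<subseteq> carrier_vec r" using S(1) cols_dim Y by blast
  have "basis S"
    using S rank rank_card_indpt[OF Y max] S_carrier
    by (intro dim_li_is_basis) (auto simp: dim_is_n finite_subset)
  then have "span S = carrier_vec r" unfolding basis_def by simp
  moreover have "v \<in> orthogonal_complement S"
  proof -
    have "v \<bullet> y = 0" if "y \<in> set (cols Y)" for y
      using that Y orth comm_scalar_prod[OF v, of y] cols_dim[of Y] by (force simp: in_set_conv_nth)
    then show ?thesis using S(1) v unfolding orthogonal_complement_def by blast
  qed
  ultimately have "v \<in> orthogonal_complement (carrier_vec r)"
    using in_orthogonal_complement_span[OF S_carrier] by simp
  then have "v \<bullet> v = 0" using v unfolding orthogonal_complement_def by blast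
  then show ?thesis using conjugate_square_eq_0_vec[OF v] by simp
qed

lemma affinely_spanning_in_hyperplane_imp_zero:
  assumes spanning: "affinely_spanning n r p" and n: "0 < n" and v: "v \<in> carrier_vec r"
    and hyperplane: "\<And>j. j < n \<Longrightarrow> p j \<bullet> v = \<alpha>"
  shows "v = 0\<^sub>v r"
proof (rule rank_full_orthogonal_cols_imp_zero[OF _ _ v])
  let ?Y = "mat r n (\<lambda>(a, j). (p j - p 0) $ a)"
  show "?Y \<in> carrier_mat r n" by simp
  show "vec_space.rank r ?Y = r" using spanning unfolding affinely_spanning_def by blast
  fix j assume j: "j < n"
  have p: "p j \<in> carrier_vec r" "p 0 \<in> carrier_vec r"
    using spanning j n unfolding affinely_spanning_def by auto
  have "col ?Y j = p j - p 0" using p j by (auto intro!: eq_vecI)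
  then show "col ?Y j \<bullet> v = 0" using minus_scalar_prod_distrib[OF p v] hyperplane j n by simp
qed

lemma scalar_prod_diff_self:
  fixes u v :: "'a::comm_ring_1 vec"
  assumes "u \<in> carrier_vec k" and "v \<in> carrier_vec k"
  shows "(u - v) \<bullet> (u - v) = u \<bullet> u + v \<bullet> v - 2 * (u \<bullet> v)"
  using assms
  by (simp add: minus_scalar_prod_distrib[of _ k] scalar_prod_minus_distrib[of _ k]
      comm_scalar_prod[of v k u] algebra_simps)

lemma sqdist_vec_unit_sphere:
  assumes "p \<in> carrier_vec r" "q \<in> carrier_vec r" "c \<in> carrier_vec r"
    and "sqdist_vec p c = 1" "sqdist_vec q c = 1"
  shows "sqdist_vec p q = 2 - 2 * ((p - c) \<bullet> (q - c))"
proof -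
  have "p - q = (p - c) - (q - c)" using assms by (auto intro!: eq_vecI)
  then show ?thesis
    using scalar_prod_diff_self[of "p - c" r "q - c"] assms unfolding sqdist_vec_def by simp
qed

definition affinely_spanning_cols :: "real mat \<Rightarrow> bool" where
  "affinely_spanning_cols X \<longleftrightarrow>
     (\<forall>v \<alpha>. v \<in> carrier_vec (dim_row X) \<longrightarrow> (\<forall>j < dim_col X. col X j \<bullet> v = \<alpha>) \<longrightarrow>
       v = 0\<^sub>v (dim_row X))"

lemma unit_spherical_edm_gram_factorization:
  assumes "unit_spherical_edm n D r" and n: "0 < n"
  obtains X :: "real mat" where "X \<in> carrier_mat r n" and "affinely_spanning_cols X"
    and "\<And>i j. i < n \<Longrightarrow> j < n \<Longrightarrow> D $$ (i, j) = 2 - 2 * (transpose_mat X * X) $$ (i, j)"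
proof -
  obtain p c where cfg: "edm_config n D r p" and c: "c \<in> carrier_vec r"
    and sphere: "\<And>i. i < n \<Longrightarrow> sqdist_vec (p i) c = 1"
    using assms(1) unfolding unit_spherical_edm_def by blast
  have spanning: "affinely_spanning n r p" and p: "\<And>i. i < n \<Longrightarrow> p i \<in> carrier_vec r"
    and D: "\<And>i j. i < n \<Longrightarrow> j < n \<Longrightarrow> D $$ (i, j) = sqdist_vec (p i) (p j)"
    using cfg unfolding edm_config_def affinely_spanning_def by auto
  define X where "X = mat r n (\<lambda>(a, i). (p i - c) $ a)"
  have X: "X \<in> carrier_mat r n" unfolding X_def by simp
  have col: "col X i = p i - c" if "i < n" for i
    unfolding X_def using that p c by (auto intro!: eq_vecI)
  show thesis
  proof (rule that[OF X])
    show "affinely_spanning_cols X" unfolding affinely_spanning_cols_def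
    proof (intro allI impI)
      fix v \<alpha> assume v: "v \<in> carrier_vec (dim_row X)"
        and hyperplane: "\<forall>j < dim_col X. col X j \<bullet> v = \<alpha>"
      have "p j \<bullet> v = \<alpha> + c \<bullet> v" if "j < n" for j
        using hyperplane col[OF that] X minus_scalar_prod_distrib[OF p[OF that] c, of v] v that
        by auto
      then show "v = 0\<^sub>v (dim_row X)"
        using affinely_spanning_in_hyperplane_imp_zero[OF spanning n] v X by auto
    qed
  next
    fix i j assume "i < n" "j < n"
    then show "D $$ (i, j) = 2 - 2 * (transpose_mat X * X) $$ (i, j)"
      using D sqdist_vec_unit_sphere[OF p p c sphere sphere] col X by simp
  qed
qed

lemma affinely_spanning_cols_det_mult_transpose:
  assumes X: "X \<in> carrier_mat r n" and spanning: "affinely_spanning_cols X"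
  shows "det (X * transpose_mat X) \<noteq> 0"
proof (rule det_mult_transpose_nonzero[OF X])
  fix v assume v: "v \<in> carrier_vec r" "transpose_mat X *\<^sub>v v = 0\<^sub>v n"
  then have "\<forall>j < dim_col X. col X j \<bullet> v = 0"
    using X by (metis carrier_matD(2) index_mult_mat_vec index_transpose_mat(2) index_zero_vec(1)
        row_transpose)
  then show "v = 0\<^sub>v r" using spanning X v(1) unfolding affinely_spanning_cols_def by auto
qed

lemma kernel_of_edm_mult_vec_eq_ones:
  fixes X :: "real mat"
  assumes X: "X \<in> carrier_mat r n" and spanning: "affinely_spanning_cols X"
    and D: "D \<in> carrier_mat n n"
    and D_gram: "\<And>i j. i < n \<Longrightarrow> j < n \<Longrightarrow> D $$ (i, j) = 2 - 2 * (transpose_mat X * X) $$ (i, j)"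
    and w: "w \<in> carrier_vec n" and Dw: "D *\<^sub>v w = ones_vec n"
  shows "X *\<^sub>v w = 0\<^sub>v r"
proof -
  define G where "G = transpose_mat X * X"
  have G: "G \<in> carrier_mat n n" using X unfolding G_def by simp
  have "col X j \<bullet> (X *\<^sub>v w) = (\<Sum>i<n. w $ i) - 1 / 2" if j: "j < n" for j
  proof -
    have "1 = (D *\<^sub>v w) $ j" using Dw j by (simp add: ones_vec_def)
    also have "\<dots> = (\<Sum>i<n. (2 - 2 * G $$ (j, i)) * w $ i)"
      using j w D_gram D unfolding G_def
      by (auto simp: scalar_prod_def lessThan_atLeast0 intro!: sum.cong)
    also have "\<dots> = 2 * (\<Sum>i<n. w $ i) - 2 * (G *\<^sub>v w) $ j"
      using j w G by (simp add: scalar_prod_def lessThan_atLeast0 left_diff_distrib sum_subtractf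
          sum_distrib_left mult.assoc)
    also have "(G *\<^sub>v w) $ j = col X j \<bullet> (X *\<^sub>v w)"
      using j X w unfolding G_def by simp
    finally show ?thesis by simp
  qed
  then show ?thesis using spanning X w unfolding affinely_spanning_cols_def by auto
qed

theorem lemma3p2:
  fixes n r :: nat and D Delta :: "real mat" and w :: "real vec"
  assumes "n \<ge> 2"
    and "unit_spherical_edm n D r"
    and "w \<in> carrier_vec n"
    and "D *\<^sub>v w = ones_vec n"
    and "Delta \<in> carrier_mat n n"
    and "D = 2 \<cdot>\<^sub>m (ones_mat n - 1\<^sub>m n) + 2 \<cdot>\<^sub>m Delta"
  shows "lambda_max Delta = 1 \<and> eigenvector Delta w (lambda_max Delta) \<and>
         r = n - eig_mult Delta (lambda_max Delta)"
proof -
  note w = \<open>w \<in> carrier_vec n\<close> and Delta = \<open>Delta \<in> carrier_mat n n\<close>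
  have n: "0 < n" using \<open>n \<ge> 2\<close> by simp
  obtain X where X: "X \<in> carrier_mat r n" and spanning: "affinely_spanning_cols X"
    and D_gram: "\<And>i j. i < n \<Longrightarrow> j < n \<Longrightarrow> D $$ (i, j) = 2 - 2 * (transpose_mat X * X) $$ (i, j)"
    using unit_spherical_edm_gram_factorization[OF \<open>unit_spherical_edm n D r\<close> n] by blast
  have D: "D \<in> carrier_mat n n" using \<open>D = _\<close> Delta by (simp add: ones_mat_def)
  have Delta_gram: "Delta = 1\<^sub>m n - transpose_mat X * X"
  proof (rule eq_matI)
    fix i j
    assume "i < dim_row (1\<^sub>m n - transpose_mat X * X)" "j < dim_col (1\<^sub>m n - transpose_mat X * X)"
    then show "Delta $$ (i, j) = (1\<^sub>m n - transpose_mat X * X) $$ (i, j)"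
      using \<open>D = _\<close> D_gram[of i j] Delta X by (auto simp: ones_mat_def)
  qed (use Delta X in auto)
  have "D *\<^sub>v 0\<^sub>v n = 0\<^sub>v n" "ones_vec n \<noteq> 0\<^sub>v n"
    using D n by (auto, metis index_vec index_zero_vec(1) ones_vec_def zero_neq_one)
  then have "w \<noteq> 0\<^sub>v n" using \<open>D *\<^sub>v w = _\<close> by auto
  moreover have "X *\<^sub>v w = 0\<^sub>v r"
    using kernel_of_edm_mult_vec_eq_ones[OF X spanning D D_gram w \<open>D *\<^sub>v w = _\<close>] .
  moreover have "det (X * transpose_mat X) \<noteq> 0"
    using affinely_spanning_cols_det_mult_transpose[OF X spanning] .
  ultimately show ?thesis
    using lambda_max_one_minus_gram[OF X w] eig_mult_one_minus_gram[OF X] Delta_gram by auto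
qed

end
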